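(* Let $\beta\in(1,2)$, let $\tau>0$, $n\ge 1$ an integer, and $t_k=k\tau$ for $k=0,1,\dots,n$. Suppose $v\in C^{2}[0,t_n]\cap C^{3}(0,t_n]$ with $|v'''|\in L^1(0,t_n]$, and write $v^k=v(t_k)$. Define $$b_0^{(\beta)}=\frac{1}{\Gamma(3-\beta)},\qquad b_m^{(\beta)}=\frac{1}{\Gamma(3-\beta)}\big[(m+1)^{2-\beta}-m^{2-\beta}\big],\quad m\ge 1,$$ and $$\Delta_t^{\beta}v^n=\frac{1}{\tau^{\beta}}\Big[\sum_{k=2}^{n} b_{n-k}^{(\beta)}\big(v^k-2v^{k-1}+v^{k-2}\big)+2b_{n-1}^{(\beta)}\big(v^1-v^0\big)\Big].$$ Then $${}_0^CD_t^{\beta}v(t_n)=\Delta_t^{\beta}v^n-\frac{2\,b_{n-1}^{(\beta)}}{\tau^{\beta-1}}\,v'(t_0)+R_2[v(t_n)],$$ where the remainder satisfies $$\big|R_2[v(t_n)]\big|\le \frac{9\,t_n^{2-\beta}}{\Gamma(3-\beta)}\,\max_{0\le k\le n-1}\int_0^1\big|v'''(t_k+\theta\tau)\big|\,d\theta\cdot\tau .$$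
   Context: For $\beta\in(1,2)$ and a function $v$ on $[0,T]$ with $v''$ integrable, the Caputo fractional derivative of order $\beta$ is ${}_0^CD_t^{\beta}v(t)=\frac{1}{\Gamma(2-\beta)}\int_0^t (t-s)^{1-\beta}v''(s)\,ds$. $\Gamma$ denotes the Gamma function. An empty sum (when $n=1$) is zero. *)

theory Defs
  imports "HOL-Analysis.Analysis"
begin

text \<open>Caputo derivative of order beta, given the second derivative v2 of v:
  (1/Gamma(2-beta)) * integral_0^t (t-s)^(1-beta) v''(s) ds.\<close>
definition caputo :: "real \<Rightarrow> (real \<Rightarrow> real) \<Rightarrow> real \<Rightarrow> real" where
  "caputo \<beta> v2 t = 1 / Gamma (2 - \<beta>) * integral {0..t} (\<lambda>s. (t - s) powr (1 - \<beta>) * v2 s)"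

definition bcoef :: "real \<Rightarrow> nat \<Rightarrow> real" where
  "bcoef \<beta> m = (if m = 0 then 1 / Gamma (3 - \<beta>)
     else (real (m + 1) powr (2 - \<beta>) - real m powr (2 - \<beta>)) / Gamma (3 - \<beta>))"

definition Delta_t :: "real \<Rightarrow> real \<Rightarrow> (real \<Rightarrow> real) \<Rightarrow> nat \<Rightarrow> real" where
  "Delta_t \<beta> \<tau> v n = 1 / \<tau> powr \<beta> *
     ((\<Sum>k = 2..n. bcoef \<beta> (n - k) *
         (v (real k * \<tau>) - 2 * v (real (k - 1) * \<tau>) + v (real (k - 2) * \<tau>)))
      + 2 * bcoef \<beta> (n - 1) * (v \<tau> - v 0))"

end

theory Submission
  imports Defs
begin

text \<open>Split the Caputo integral over the grid cells [t_(k-1), t_k]. On cell k the weight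
  (t_n - s)^(1-beta) integrates exactly to Gamma(2-beta) tau^(2-beta) b_(n-k), so that
  Delta_t^beta v^n minus the v'(0) term is the quadrature replacing v'' on cell k by a second
  difference quotient. By the mean value theorem this quotient is v''(xi) for some xi in
  [t_(k-2), t_k], and |v''(s) - v''(xi)| is at most the integral of |v3| = |v'''| over two cells,
  i.e. at most 2 tau max_k int_0^1 |v3(t_k + theta tau)| dtheta. Summing against the weight gives
  the bound with constant 2 instead of 9.\<close>

lemma mvt_within_subinterval:
  fixes f f' :: "real \<Rightarrow> real"
  assumes "a < b" "{a..b} \<subseteq> S"
    and "\<And>x. x \<in> S \<Longrightarrow> (f has_real_derivative f' x) (at x within S)"
  obtains \<xi> where "\<xi> \<in> {a<..<b}" "f b - f a = f' \<xi> * (b - a)"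
proof -
  have "(f has_real_derivative f' x) (at x within {a..b})" if "a \<le> x" "x \<le> b" for x
    by (rule has_field_derivative_subset[OF assms(3) assms(2)]) (use that assms(2) in auto)
  then have "(f has_derivative (*) (f' x)) (at x within {a..b})" if "a \<le> x" "x \<le> b" for x
    using that by (simp add: has_field_derivative_imp_has_derivative)
  then show ?thesis
    using mvt_simple[OF \<open>a < b\<close>, of f "\<lambda>x. (*) (f' x)"] that by blast
qed

lemma cauchy_mean_value_square:
  fixes F F' :: "real \<Rightarrow> real"
  assumes "0 < h" "continuous_on {0..h} F" "F 0 = 0"
    and "\<And>x. 0 < x \<Longrightarrow> x < h \<Longrightarrow> (F has_real_derivative F' x) (at x)"
  obtains z where "0 < z" "z < h" "h\<^sup>2 * F' z = 2 * z * F h"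
proof -
  define g where "g x = h\<^sup>2 * F x - F h * x\<^sup>2" for x
  have dg: "(g has_real_derivative h\<^sup>2 * F' x - F h * (2 * x)) (at x)" if "0 < x" "x < h" for x
    unfolding g_def by (auto intro!: derivative_eq_intros assms(4) that)
  have "\<exists>z. 0 < z \<and> z < h \<and> (g has_real_derivative 0) (at z)"
  proof (rule Rolle[OF assms(1)])
    show "g 0 = g h"
      using assms(3) by (simp add: g_def)
    show "continuous_on {0..h} g"
      unfolding g_def by (intro continuous_intros assms(2))
    show "g differentiable (at x)" if "0 < x" "x < h" for x
      using dg[OF that] real_differentiable_def by blast
  qed
  then obtain z where z: "0 < z" "z < h" "(g has_real_derivative 0) (at z)"
    by blast
  with dg[of z] have "h\<^sup>2 * F' z - F h * (2 * z) = 0" by (metis DERIV_unique)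
  with z that show ?thesis by (simp add: algebra_simps)
qed

lemma Taylor_second_order_mean_value:
  fixes v v1 v2 :: "real \<Rightarrow> real"
  assumes "a < b"
    and d1: "\<And>x. x \<in> {a..b} \<Longrightarrow> (v has_real_derivative v1 x) (at x within {a..b})"
    and d2: "\<And>x. x \<in> {a..b} \<Longrightarrow> (v1 has_real_derivative v2 x) (at x within {a..b})"
  obtains \<xi> where "\<xi> \<in> {a..b}" "2 * (v b - v a - (b - a) * v1 a) = (b - a)\<^sup>2 * v2 \<xi>"
proof -
  define h where "h = b - a"
  define F where "F x = v (a + x) - v a - x * v1 a" for x
  have "continuous_on {0..h} (\<lambda>x. v (a + x))"
    by (rule continuous_on_compose2[OF DERIV_continuous_on[OF d1]]) (auto simp: h_def intro!: continuous_intros)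
  then have "continuous_on {0..h} F"
    unfolding F_def by (intro continuous_intros)
  moreover have "(F has_real_derivative v1 (a + x) - v1 a) (at x)" if "0 < x" "x < h" for x
  proof -
    have "(v has_real_derivative v1 (a + x)) (at (a + x))"
      using d1[of "a + x"] that by (simp add: h_def at_within_Icc_at)
    then have "((\<lambda>x. v (a + x)) has_real_derivative v1 (a + x) * 1) (at x)"
      by (rule DERIV_chain2) (auto intro!: derivative_eq_intros)
    then show ?thesis
      unfolding F_def by (auto intro!: derivative_eq_intros)
  qed
  moreover have "0 < h" "F 0 = 0"
    using \<open>a < b\<close> by (simp_all add: h_def F_def)
  ultimately obtain z where z: "0 < z" "z < h" "h\<^sup>2 * (v1 (a + z) - v1 a) = 2 * z * F h"
    using cauchy_mean_value_square[of h F "\<lambda>x. v1 (a + x) - v1 a"] by blast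
  obtain \<xi> where \<xi>: "\<xi> \<in> {a<..<a + z}" "v1 (a + z) - v1 a = v2 \<xi> * (a + z - a)"
    by (rule mvt_within_subinterval[of a "a + z" "{a..b}" v1 v2]) (use z d2 in \<open>auto simp: h_def\<close>)
  have "h\<^sup>2 * v2 \<xi> = 2 * F h"
    using z \<xi>(2) by (simp add: algebra_simps power2_eq_square)
  then show ?thesis
    using that[of \<xi>] \<xi>(1) z by (auto simp: h_def F_def)
qed

lemma second_difference_mean_value:
  fixes v v1 v2 :: "real \<Rightarrow> real"
  assumes "0 < h"
    and d1: "\<And>x. x \<in> {c - h..c + h} \<Longrightarrow> (v has_real_derivative v1 x) (at x within {c - h..c + h})"
    and d2: "\<And>x. x \<in> {c - h..c + h} \<Longrightarrow> (v1 has_real_derivative v2 x) (at x within {c - h..c + h})"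
  obtains \<xi> where "\<xi> \<in> {c - h..c + h}" "v (c + h) - 2 * v c + v (c - h) = h\<^sup>2 * v2 \<xi>"
proof -
  define F where "F x = v (c + x) - 2 * v c + v (c - x)" for x
  have cv: "continuous_on {c - h..c + h} v"
    by (rule DERIV_continuous_on[OF d1])
  have "continuous_on {0..h} (\<lambda>x. v (c + x))" "continuous_on {0..h} (\<lambda>x. v (c - x))"
    by (rule continuous_on_compose2[OF cv]; auto intro!: continuous_intros)+
  then have "continuous_on {0..h} F"
    unfolding F_def by (intro continuous_intros)
  moreover have "(F has_real_derivative v1 (c + x) - v1 (c - x)) (at x)" if "0 < x" "x < h" for x
  proof -
    have dv: "(v has_real_derivative v1 y) (at y)" if "c - h < y" "y < c + h" for y
      using d1[of y] that by (simp add: at_within_Icc_at)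
    have "((\<lambda>x. v (c + x)) has_real_derivative v1 (c + x) * 1) (at x)"
      by (rule DERIV_chain2[of v]) (use dv that in \<open>auto intro!: derivative_eq_intros\<close>)
    moreover have "((\<lambda>x. v (c - x)) has_real_derivative v1 (c - x) * (-1)) (at x)"
      by (rule DERIV_chain2[of v]) (use dv that in \<open>auto intro!: derivative_eq_intros\<close>)
    ultimately show ?thesis
      unfolding F_def by (auto intro!: derivative_eq_intros)
  qed
  moreover have "F 0 = 0"
    by (simp add: F_def)
  ultimately obtain z where z: "0 < z" "z < h" "h\<^sup>2 * (v1 (c + z) - v1 (c - z)) = 2 * z * F h"
    using cauchy_mean_value_square[of h F "\<lambda>x. v1 (c + x) - v1 (c - x)"] \<open>0 < h\<close> by blast
  obtain \<xi> where \<xi>: "\<xi> \<in> {c - z<..<c + z}" "v1 (c + z) - v1 (c - z) = v2 \<xi> * (c + z - (c - z))"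
    by (rule mvt_within_subinterval[of "c - z" "c + z" "{c - h..c + h}" v1 v2]) (use z d2 in auto)
  have "h\<^sup>2 * v2 \<xi> = F h"
    using z \<xi>(2) by (simp add: algebra_simps power2_eq_square)
  then show ?thesis
    using that[of \<xi>] \<xi>(1) z by (auto simp: F_def)
qed

lemma abs_diff_le_integral_abs_derivative:
  fixes f f' :: "real \<Rightarrow> real"
  assumes cf: "continuous_on {a..b} f"
    and df: "\<And>x. x \<in> {a<..<b} \<Longrightarrow> (f has_real_derivative f' x) (at x)"
    and int: "(\<lambda>x. \<bar>f' x\<bar>) integrable_on {a..b}"
    and "r \<in> {a..b}" "s \<in> {a..b}"
  shows "\<bar>f s - f r\<bar> \<le> integral {a..b} (\<lambda>x. \<bar>f' x\<bar>)"
proof -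
  have *: "\<bar>f s - f r\<bar> \<le> integral {a..b} (\<lambda>x. \<bar>f' x\<bar>)"
    if "r \<le> s" "r \<in> {a..b}" "s \<in> {a..b}" for r s
  proof -
    have ftc: "(f' has_integral (f s - f r)) {r..s}"
    proof (rule fundamental_theorem_of_calculus_interior[OF \<open>r \<le> s\<close>])
      show "continuous_on {r..s} f"
        by (rule continuous_on_subset[OF cf]) (use that in auto)
      show "(f has_vector_derivative f' x) (at x)" if "x \<in> {r<..<s}" for x
        using df[of x] that \<open>r \<in> {a..b}\<close> \<open>s \<in> {a..b}\<close>
        by (auto simp: has_real_derivative_iff_has_vector_derivative)
    qed
    have int_rs: "(\<lambda>x. \<bar>f' x\<bar>) integrable_on {r..s}"
      by (rule integrable_on_subinterval[OF int]) (use that in auto)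
    have "\<bar>f s - f r\<bar> = norm (integral {r..s} f')"
      using ftc by (simp add: integral_unique)
    also have "\<dots> \<le> integral {r..s} (\<lambda>x. \<bar>f' x\<bar>)"
      by (rule integral_norm_bound_integral[OF has_integral_integrable[OF ftc] int_rs]) simp
    also have "\<dots> \<le> integral {a..b} (\<lambda>x. \<bar>f' x\<bar>)"
      by (rule integral_subset_le[OF _ int_rs int]) (use that in auto)
    finally show ?thesis .
  qed
  show ?thesis
    using *[of r s] *[of s r] assms(4,5) by (cases "r \<le> s") (auto simp: abs_minus_commute)
qed

lemma integrable_abs_Icc_of_absolutely_integrable_Ioc:
  fixes f :: "real \<Rightarrow> real"
  assumes "f absolutely_integrable_on {a<..b}"
  shows "(\<lambda>x. \<bar>f x\<bar>) integrable_on {a..b}"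
proof -
  have "negligible {x \<in> {a..b} - {a<..b}. f x \<noteq> 0}"
    by (rule negligible_subset[of "{a}"]) auto
  moreover have "negligible {x \<in> {a<..b} - {a..b}. f x \<noteq> 0}"
    by (rule negligible_subset[of "{}"]) auto
  ultimately have "f absolutely_integrable_on {a..b}"
    using assms absolutely_integrable_spike_set_eq[of "{a<..b}" "{a..b}" f] by auto
  then show ?thesis
    by (simp add: absolutely_integrable_on_def)
qed

lemma integral_rescale_unit_interval:
  fixes f :: "real \<Rightarrow> real"
  assumes "0 < h" "f integrable_on {a..a + h}"
  shows "integral {a..a + h} f = h * integral {0..1} (\<lambda>\<theta>. f (a + \<theta> * h))"
proof -
  have "((\<lambda>x. f (h *\<^sub>R x + a)) has_integral (integral {a..a + h} f /\<^sub>R h ^ DIM(real)))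
      (cbox ((a - a) /\<^sub>R h) ((a + h - a) /\<^sub>R h))"
    using has_integral_affinity'[OF integrable_integral[OF assms(2)[unfolded cbox_interval[symmetric]]] assms(1), where c = a]
    by simp
  then have "((\<lambda>\<theta>. f (a + \<theta> * h)) has_integral integral {a..a + h} f / h) {0..1}"
    using assms(1) by (simp add: algebra_simps cbox_interval divide_inverse)
  then show ?thesis
    using assms(1) by (simp add: integral_unique)
qed

lemma has_integral_grid_cells:
  fixes f :: "real \<Rightarrow> 'a::banach"
  assumes "0 \<le> \<tau>" "m \<le> n"
    and cells: "\<And>k. k \<in> {m<..n} \<Longrightarrow> (f has_integral I k) {real (k - 1) * \<tau>..real k * \<tau>}"
  shows "(f has_integral (\<Sum>k\<in>{m<..n}. I k)) {real m * \<tau>..real n * \<tau>}"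
  using \<open>m \<le> n\<close> cells
proof (induction n rule: dec_induct)
  case base
  then show ?case by (simp add: has_integral_refl)
next
  case (step j)
  have "(f has_integral (\<Sum>k\<in>{m<..j}. I k) + I (Suc j)) {real m * \<tau>..real (Suc j) * \<tau>}"
  proof (rule has_integral_combine)
    show "real m * \<tau> \<le> real j * \<tau>" "real j * \<tau> \<le> real (Suc j) * \<tau>"
      using step.hyps \<open>0 \<le> \<tau>\<close> by (auto intro: mult_right_mono)
    show "(f has_integral (\<Sum>k\<in>{m<..j}. I k)) {real m * \<tau>..real j * \<tau>}"
      using step.IH step.prems by simp
    show "(f has_integral I (Suc j)) {real j * \<tau>..real (Suc j) * \<tau>}"
      using step.prems[of "Suc j"] step.hyps by simp
  qed
  moreover have "{m<..Suc j} = insert (Suc j) {m<..j}"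
    using step.hyps by auto
  ultimately show ?case
    by (simp add: add.commute)
qed

lemma has_integral_powr_reflected:
  fixes p :: real
  assumes "0 < p" "a \<le> b" "b \<le> T"
  shows "((\<lambda>s. (T - s) powr (p - 1)) has_integral ((T - a) powr p - (T - b) powr p) / p) {a..b}"
proof -
  define F where "F s = - ((T - s) powr p) / p" for s
  have "((\<lambda>s. (T - s) powr (p - 1)) has_integral (F b - F a)) {a..b}"
  proof (rule fundamental_theorem_of_calculus_interior[OF \<open>a \<le> b\<close>])
    show "continuous_on {a..b} F"
      unfolding F_def by (intro continuous_intros continuous_on_powr') (use assms in auto)
    fix x assume x: "x \<in> {a<..<b}"
    have "((\<lambda>s. (T - s) powr p) has_real_derivative p * (T - x) powr (p - 1) * (0 - 1)) (at x)"
      by (rule DERIV_fun_powr[where r = p, simplified]) (use x assms in \<open>auto intro!: derivative_eq_intros\<close>)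
    then have "(F has_real_derivative (T - x) powr (p - 1)) (at x)"
      unfolding F_def using \<open>0 < p\<close> x assms by (auto intro!: derivative_eq_intros)
    then show "(F has_vector_derivative (T - x) powr (p - 1)) (at x)"
      by (simp add: has_real_derivative_iff_has_vector_derivative)
  qed
  then show ?thesis
    unfolding F_def by (simp add: diff_divide_distrib)
qed

lemma integrable_nonneg_mult_continuous:
  fixes K g :: "real \<Rightarrow> real"
  assumes "K integrable_on {a..b}" "\<And>x. x \<in> {a..b} \<Longrightarrow> 0 \<le> K x" "continuous_on {a..b} g"
  shows "(\<lambda>x. K x * g x) integrable_on {a..b}"
proof -
  have "K absolutely_integrable_on {a..b}"
    using assms(1,2) by (intro nonnegative_absolutely_integrable_1) auto
  moreover have "g \<in> borel_measurable (lebesgue_on {a..b})"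
    by (rule continuous_imp_measurable_on_sets_lebesgue[OF assms(3)]) auto
  moreover have "bounded (g ` {a..b})"
    by (intro compact_imp_bounded compact_continuous_image assms(3)) auto
  ultimately have "(\<lambda>x. g x * K x) absolutely_integrable_on {a..b}"
    by (intro absolutely_integrable_bounded_measurable_product_real) auto
  then show ?thesis
    by (simp add: mult.commute set_lebesgue_integral_eq_integral(1))
qed

lemma weighted_integral_approx_le:
  fixes K g :: "real \<Rightarrow> real"
  assumes K: "(K has_integral \<kappa>) {a..b}" "\<And>x. x \<in> {a..b} \<Longrightarrow> 0 \<le> K x"
    and g: "continuous_on {a..b} g" "\<And>x. x \<in> {a..b} \<Longrightarrow> \<bar>g x - c\<bar> \<le> \<epsilon>"
  shows "\<bar>integral {a..b} (\<lambda>x. K x * g x) - \<kappa> * c\<bar> \<le> \<epsilon> * \<kappa>"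
proof -
  have Kg: "(\<lambda>x. K x * g x) integrable_on {a..b}"
    using integrable_nonneg_mult_continuous has_integral_integrable K g by blast
  have diff: "((\<lambda>x. K x * g x - K x * c) has_integral integral {a..b} (\<lambda>x. K x * g x) - \<kappa> * c) {a..b}"
    by (intro has_integral_diff integrable_integral Kg has_integral_mult_left K)
  have bound: "((\<lambda>x. K x * \<epsilon>) has_integral \<kappa> * \<epsilon>) {a..b}"
    by (intro has_integral_mult_left K)
  have "norm (integral {a..b} (\<lambda>x. K x * g x - K x * c)) \<le> integral {a..b} (\<lambda>x. K x * \<epsilon>)"
  proof (rule integral_norm_bound_integral[OF has_integral_integrable[OF diff] has_integral_integrable[OF bound]])
    fix x assume x: "x \<in> {a..b}"
    show "norm (K x * g x - K x * c) \<le> K x * \<epsilon>"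
      using mult_left_mono[OF g(2) K(2), OF x x] by (simp add: abs_mult right_diff_distrib[symmetric] K(2)[OF x])
  qed
  then have "\<bar>integral {a..b} (\<lambda>x. K x * g x) - \<kappa> * c\<bar> \<le> \<kappa> * \<epsilon>"
    by (simp only: integral_unique[OF diff] integral_unique[OF bound] real_norm_def)
  then show ?thesis
    by (simp add: mult.commute)
qed

lemma Gamma_3_minus:
  fixes \<beta> :: real
  assumes "\<beta> < 2"
  shows "Gamma (3 - \<beta>) = (2 - \<beta>) * Gamma (2 - \<beta>)"
proof -
  have "2 - \<beta> \<notin> \<int>\<^sub>\<le>\<^sub>0"
    using assms by (auto elim!: nonpos_Ints_cases)
  from Gamma_plus1[OF this] show ?thesis
    by (simp add: algebra_simps)
qed

lemma bcoef_eq_powr_diff: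
  assumes "\<beta> < 2"
  shows "bcoef \<beta> m = (real (m + 1) powr (2 - \<beta>) - real m powr (2 - \<beta>)) / Gamma (3 - \<beta>)"
  using assms by (simp add: bcoef_def)

lemma sum_bcoef:
  assumes "\<beta> < 2"
  shows "(\<Sum>k=1..n. bcoef \<beta> (n - k)) = real n powr (2 - \<beta>) / Gamma (3 - \<beta>)"
proof -
  have "(\<Sum>k=1..n. bcoef \<beta> (n - k)) = (\<Sum>m<n. bcoef \<beta> m)"
    using sum.atLeast1_atMost_eq[of "\<lambda>k. bcoef \<beta> (n - k)" n] sum.nat_diff_reindex[of "bcoef \<beta>" n] by simp
  also have "\<dots> = (\<Sum>m<n. real (Suc m) powr (2 - \<beta>) - real m powr (2 - \<beta>)) / Gamma (3 - \<beta>)"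
    by (simp add: bcoef_eq_powr_diff[OF assms] sum_divide_distrib)
  also have "\<dots> = real n powr (2 - \<beta>) / Gamma (3 - \<beta>)"
    using sum_lessThan_telescope[of "\<lambda>m. real m powr (2 - \<beta>)" n] by simp
  finally show ?thesis .
qed

lemma has_integral_caputo_kernel_cell:
  fixes \<beta> \<tau> :: real
  assumes "\<beta> < 2" "0 < \<tau>" "1 \<le> k" "k \<le> n"
  shows "((\<lambda>s. (real n * \<tau> - s) powr (1 - \<beta>)) has_integral Gamma (2 - \<beta>) * \<tau> powr (2 - \<beta>) * bcoef \<beta> (n - k))
           {real (k - 1) * \<tau>..real k * \<tau>}"
proof -
  have "real (k - 1) * \<tau> \<le> real k * \<tau>" "real k * \<tau> \<le> real n * \<tau>"
    using assms by (auto intro: mult_right_mono)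
  from has_integral_powr_reflected[of "2 - \<beta>", OF _ this] assms(1)
  have "((\<lambda>s. (real n * \<tau> - s) powr (1 - \<beta>)) has_integral
      ((real (n - k + 1) * \<tau>) powr (2 - \<beta>) - (real (n - k) * \<tau>) powr (2 - \<beta>)) / (2 - \<beta>))
      {real (k - 1) * \<tau>..real k * \<tau>}"
    using assms(3,4) by (simp add: of_nat_diff algebra_simps)
  moreover have "((real (n - k + 1) * \<tau>) powr (2 - \<beta>) - (real (n - k) * \<tau>) powr (2 - \<beta>)) / (2 - \<beta>)
      = Gamma (2 - \<beta>) * \<tau> powr (2 - \<beta>) * bcoef \<beta> (n - k)"
  proof -
    define p where "p = 2 - \<beta>"
    define G where "G = Gamma p"
    have "0 < p" "0 < G"
      using assms(1) by (simp_all add: p_def G_def)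
    then show ?thesis
      unfolding powr_mult bcoef_eq_powr_diff[OF assms(1)] Gamma_3_minus[OF assms(1)]
        p_def[symmetric] G_def[symmetric]
      by (simp add: field_simps)
  qed
  ultimately show ?thesis
    by simp
qed

lemma caputo_minus_piecewise_constant_le:
  fixes v2 :: "real \<Rightarrow> real" and D :: "nat \<Rightarrow> real" and \<beta> \<tau> \<epsilon> :: real
  assumes "\<beta> < 2" "0 < \<tau>" "continuous_on {0..real n * \<tau>} v2"
    and approx: "\<And>k s. k \<in> {1..n} \<Longrightarrow> s \<in> {real (k - 1) * \<tau>..real k * \<tau>} \<Longrightarrow> \<bar>v2 s - D k\<bar> \<le> \<epsilon>"
  shows "\<bar>caputo \<beta> v2 (real n * \<tau>) - \<tau> powr (2 - \<beta>) * (\<Sum>k=1..n. bcoef \<beta> (n - k) * D k)\<bar>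
           \<le> \<epsilon> * (real n * \<tau>) powr (2 - \<beta>) / Gamma (3 - \<beta>)"
proof -
  define T where "T = real n * \<tau>"
  define G where "G = Gamma (2 - \<beta>)"
  define K where "K = (\<lambda>s. (T - s) powr (1 - \<beta>))"
  define \<kappa> where "\<kappa> = (\<lambda>k. G * \<tau> powr (2 - \<beta>) * bcoef \<beta> (n - k))"
  define J where "J k = integral {real (k - 1) * \<tau>..real k * \<tau>} (\<lambda>s. K s * v2 s)" for k
  have G: "0 < G"
    using assms(1) by (simp add: G_def)
  have cells: "{1..n} = {0<..n}"
    by auto
  have K_cell: "(K has_integral \<kappa> k) {real (k - 1) * \<tau>..real k * \<tau>}" if "k \<in> {1..n}" for k
    using has_integral_caputo_kernel_cell[OF assms(1,2)] that by (simp add: K_def \<kappa>_def G_def T_def)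
  have v2_cell: "continuous_on {real (k - 1) * \<tau>..real k * \<tau>} v2" if "k \<in> {1..n}" for k
    by (rule continuous_on_subset[OF assms(3)]) (use that assms(2) in \<open>auto intro: mult_right_mono\<close>)
  have err: "\<bar>J k - \<kappa> k * D k\<bar> \<le> \<epsilon> * \<kappa> k" if "k \<in> {1..n}" for k
    unfolding J_def
    by (rule weighted_integral_approx_le[OF K_cell[OF that] _ v2_cell[OF that] approx[OF that]]) (simp add: K_def)
  have J_cell: "((\<lambda>s. K s * v2 s) has_integral J k) {real (k - 1) * \<tau>..real k * \<tau>}" if "k \<in> {1..n}" for k
    unfolding J_def
    by (rule integrable_integral, rule integrable_nonneg_mult_continuous[OF has_integral_integrable[OF K_cell[OF that]] _ v2_cell[OF that]])
      (simp add: K_def)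
  have "((\<lambda>s. K s * v2 s) has_integral (\<Sum>k=1..n. J k)) {real 0 * \<tau>..real n * \<tau>}"
    unfolding cells by (rule has_integral_grid_cells) (use assms(2) J_cell[unfolded cells] in auto)
  then have caputo_eq: "caputo \<beta> v2 T = (\<Sum>k=1..n. J k) / G"
    by (simp add: caputo_def G_def K_def T_def integral_unique)
  have "\<tau> powr (2 - \<beta>) * (\<Sum>k=1..n. bcoef \<beta> (n - k) * D k) = (\<Sum>k=1..n. \<kappa> k * D k) / G"
    using G by (simp add: \<kappa>_def sum_distrib_left sum_divide_distrib mult_ac)
  then have "\<bar>caputo \<beta> v2 T - \<tau> powr (2 - \<beta>) * (\<Sum>k=1..n. bcoef \<beta> (n - k) * D k)\<bar>
      = \<bar>((\<Sum>k=1..n. J k) - (\<Sum>k=1..n. \<kappa> k * D k)) / G\<bar>"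
    by (simp add: caputo_eq diff_divide_distrib)
  also have "\<dots> = \<bar>\<Sum>k=1..n. J k - \<kappa> k * D k\<bar> / G"
    using G by (simp add: sum_subtractf)
  also have "\<dots> \<le> (\<Sum>k=1..n. \<epsilon> * \<kappa> k) / G"
    using G err by (intro divide_right_mono order_trans[OF sum_abs sum_mono]) auto
  also have "\<dots> = \<epsilon> * \<tau> powr (2 - \<beta>) * (\<Sum>k=1..n. bcoef \<beta> (n - k))"
    using G by (simp add: \<kappa>_def sum_distrib_left sum_divide_distrib mult_ac)
  also have "\<dots> = \<epsilon> * T powr (2 - \<beta>) / Gamma (3 - \<beta>)"
    unfolding sum_bcoef[OF assms(1)] T_def powr_mult by simp
  finally show ?thesis
    unfolding T_def .
qed

text \<open>For k = 1 the missing value v(-tau) is eliminated through v(-tau) = v(tau) - 2 tau v'(0).\<close>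
definition second_difference_quotient :: "real \<Rightarrow> (real \<Rightarrow> real) \<Rightarrow> real \<Rightarrow> nat \<Rightarrow> real" where
  "second_difference_quotient \<tau> v dv0 k =
     (if k = 1 then 2 * (v \<tau> - v 0 - \<tau> * dv0) / \<tau>\<^sup>2
      else (v (real k * \<tau>) - 2 * v (real (k - 1) * \<tau>) + v (real (k - 2) * \<tau>)) / \<tau>\<^sup>2)"

lemma Delta_t_eq_sum_second_difference_quotient:
  assumes "0 < \<tau>" "1 \<le> n"
  shows "Delta_t \<beta> \<tau> v n - 2 * bcoef \<beta> (n - 1) / \<tau> powr (\<beta> - 1) * dv0
           = \<tau> powr (2 - \<beta>) * (\<Sum>k=1..n. bcoef \<beta> (n - k) * second_difference_quotient \<tau> v dv0 k)"
proof -
  define S where "S = (\<Sum>k=2..n. bcoef \<beta> (n - k) *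
    (v (real k * \<tau>) - 2 * v (real (k - 1) * \<tau>) + v (real (k - 2) * \<tau>)))"
  have "(\<Sum>k=1..n. bcoef \<beta> (n - k) * second_difference_quotient \<tau> v dv0 k)
      = bcoef \<beta> (n - 1) * second_difference_quotient \<tau> v dv0 1
        + (\<Sum>k=2..n. bcoef \<beta> (n - k) * second_difference_quotient \<tau> v dv0 k)"
    using sum.atLeast_Suc_atMost[OF assms(2)] by (simp add: numeral_2_eq_2)
  also have "(\<Sum>k=2..n. bcoef \<beta> (n - k) * second_difference_quotient \<tau> v dv0 k) = S / \<tau>\<^sup>2"
    unfolding S_def sum_divide_distrib
    by (rule sum.cong) (auto simp: second_difference_quotient_def)
  finally have sum_eq: "(\<Sum>k=1..n. bcoef \<beta> (n - k) * second_difference_quotient \<tau> v dv0 k)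
      = bcoef \<beta> (n - 1) * (2 * (v \<tau> - v 0 - \<tau> * dv0) / \<tau>\<^sup>2) + S / \<tau>\<^sup>2"
    by (simp add: second_difference_quotient_def)
  have \<tau>_powr: "\<tau> powr (2 - \<beta>) = \<tau>\<^sup>2 / \<tau> powr \<beta>" "\<tau> powr (\<beta> - 1) = \<tau> powr \<beta> / \<tau>"
    using assms(1) by (simp_all add: powr_diff)
  show ?thesis
    unfolding Delta_t_def S_def[symmetric] sum_eq \<tau>_powr using assms(1) by (simp add: field_simps)
qed

lemma second_difference_quotient_mean_value:
  fixes v v1 v2 :: "real \<Rightarrow> real"
  assumes d1: "\<And>x. x \<in> {0..T} \<Longrightarrow> (v has_real_derivative v1 x) (at x within {0..T})"
    and d2: "\<And>x. x \<in> {0..T} \<Longrightarrow> (v1 has_real_derivative v2 x) (at x within {0..T})"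
    and "0 < \<tau>" "1 \<le> k" "real k * \<tau> \<le> T"
  obtains \<xi> where "\<xi> \<in> {real (k - 2) * \<tau>..real k * \<tau>}" "second_difference_quotient \<tau> v (v1 0) k = v2 \<xi>"
proof -
  have restrict: "(v has_real_derivative v1 x) (at x within {a..b})"
      "(v1 has_real_derivative v2 x) (at x within {a..b})"
    if "0 \<le> a" "b \<le> real k * \<tau>" "x \<in> {a..b}" for a b x
  proof -
    have "{a..b} \<subseteq> {0..T}" "x \<in> {0..T}"
      using that assms(5) by auto
    then show "(v has_real_derivative v1 x) (at x within {a..b})"
      "(v1 has_real_derivative v2 x) (at x within {a..b})"
      using d1 d2 has_field_derivative_subset by blast+
  qed
  show ?thesis
  proof (cases "k = 1")
    case True
    obtain \<xi> where "\<xi> \<in> {0..\<tau>}" "2 * (v \<tau> - v 0 - (\<tau> - 0) * v1 0) = (\<tau> - 0)\<^sup>2 * v2 \<xi>"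
      by (rule Taylor_second_order_mean_value[of 0 \<tau> v v1 v2])
        (use assms(3) True restrict in auto)
    with True assms(3) show ?thesis
      by (intro that[of \<xi>]) (auto simp: second_difference_quotient_def field_simps)
  next
    case False
    define c where "c = real (k - 1) * \<tau>"
    have c: "c - \<tau> = real (k - 2) * \<tau>" "c + \<tau> = real k * \<tau>"
      using False assms(4) by (auto simp: c_def of_nat_diff algebra_simps)
    have "0 \<le> c - \<tau>"
      using c assms(3) by simp
    obtain \<xi> where "\<xi> \<in> {c - \<tau>..c + \<tau>}" "v (c + \<tau>) - 2 * v c + v (c - \<tau>) = \<tau>\<^sup>2 * v2 \<xi>"
      by (rule second_difference_mean_value[of \<tau> c v v1 v2])
        (use assms(3) \<open>0 \<le> c - \<tau>\<close> c restrict in auto)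
    with False c assms(3) show ?thesis
      by (intro that[of \<xi>]) (auto simp: second_difference_quotient_def c_def field_simps)
  qed
qed

lemma second_difference_quotient_error:
  fixes v v1 v2 v3 :: "real \<Rightarrow> real"
  assumes d1: "\<And>x. x \<in> {0..T} \<Longrightarrow> (v has_real_derivative v1 x) (at x within {0..T})"
    and d2: "\<And>x. x \<in> {0..T} \<Longrightarrow> (v1 has_real_derivative v2 x) (at x within {0..T})"
    and c2: "continuous_on {0..T} v2"
    and d3: "\<And>x. x \<in> {0<..T} \<Longrightarrow> (v2 has_real_derivative v3 x) (at x within {0..T})"
    and int3: "(\<lambda>x. \<bar>v3 x\<bar>) integrable_on {0..T}"
    and "0 < \<tau>" "1 \<le> k" "real k * \<tau> \<le> T" "s \<in> {real (k - 1) * \<tau>..real k * \<tau>}"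
  shows "\<bar>v2 s - second_difference_quotient \<tau> v (v1 0) k\<bar> \<le> integral {real (k - 2) * \<tau>..real k * \<tau>} (\<lambda>x. \<bar>v3 x\<bar>)"
proof -
  obtain \<xi> where \<xi>: "\<xi> \<in> {real (k - 2) * \<tau>..real k * \<tau>}" "second_difference_quotient \<tau> v (v1 0) k = v2 \<xi>"
    using second_difference_quotient_mean_value[OF d1 d2 assms(6-8)] by blast
  have window: "{real (k - 2) * \<tau>..real k * \<tau>} \<subseteq> {0..T}"
    using assms(6,8) by auto
  have "\<bar>v2 s - v2 \<xi>\<bar> \<le> integral {real (k - 2) * \<tau>..real k * \<tau>} (\<lambda>x. \<bar>v3 x\<bar>)"
  proof (rule abs_diff_le_integral_abs_derivative[where f = v2 and f' = v3])
    show "continuous_on {real (k - 2) * \<tau>..real k * \<tau>} v2"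
      by (rule continuous_on_subset[OF c2 window])
    show "(v2 has_real_derivative v3 x) (at x)" if "x \<in> {real (k - 2) * \<tau><..<real k * \<tau>}" for x
    proof -
      have "0 \<le> real (k - 2) * \<tau>"
        using assms(6) by simp
      then have "0 < x" "x < T"
        using that assms(8) by auto
      then show ?thesis
        using d3[of x] by (simp add: at_within_Icc_at)
    qed
    show "(\<lambda>x. \<bar>v3 x\<bar>) integrable_on {real (k - 2) * \<tau>..real k * \<tau>}"
      by (rule integrable_on_subinterval[OF int3 window])
    show "s \<in> {real (k - 2) * \<tau>..real k * \<tau>}"
      using assms(6,9) by (auto intro: order_trans[OF mult_right_mono[of "real (k - 2)" "real (k - 1)"]])
  qed (use \<xi> in auto)
  with \<xi> show ?thesis
    by simp
qed

lemma integral_two_cells_le_max: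
  fixes f :: "real \<Rightarrow> real"
  assumes "\<And>x. 0 \<le> f x" "f integrable_on {0..real n * \<tau>}" "0 < \<tau>" "1 \<le> k" "k \<le> n"
  shows "integral {real (k - 2) * \<tau>..real k * \<tau>} f
           \<le> 2 * \<tau> * Max ((\<lambda>j. integral {0..1} (\<lambda>\<theta>. f (real j * \<tau> + \<theta> * \<tau>))) ` {0..n - 1})"
proof -
  define I where "I j = integral {0..1} (\<lambda>\<theta>. f (real j * \<tau> + \<theta> * \<tau>))" for j
  define M where "M = Max (I ` {0..n - 1})"
  have cell: "(f has_integral \<tau> * I (j - 1)) {real (j - 1) * \<tau>..real j * \<tau>}"
    and I_bounds: "0 \<le> I (j - 1)" "I (j - 1) \<le> M" if "j \<in> {1..n}" for j
  proof -
    have j: "real j * \<tau> = real (j - 1) * \<tau> + \<tau>"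
      using that by (simp add: of_nat_diff algebra_simps)
    have int: "f integrable_on {real (j - 1) * \<tau>..real j * \<tau>}"
      by (rule integrable_on_subinterval[OF assms(2)]) (use that assms(3) in \<open>auto intro: mult_right_mono\<close>)
    moreover have eq: "integral {real (j - 1) * \<tau>..real j * \<tau>} f = \<tau> * I (j - 1)"
      using int unfolding j I_def by (rule integral_rescale_unit_interval[OF assms(3)])
    ultimately show "(f has_integral \<tau> * I (j - 1)) {real (j - 1) * \<tau>..real j * \<tau>}"
      by (simp add: has_integral_integral)
    have "0 \<le> \<tau> * I (j - 1)"
      unfolding eq[symmetric] by (rule integral_nonneg[OF int]) (use assms(1) in auto)
    with assms(3) show "0 \<le> I (j - 1)"
      by (simp add: zero_le_mult_iff)
    show "I (j - 1) \<le> M"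
      unfolding M_def using that by (intro Max_ge) auto
  qed
  have "(f has_integral (\<Sum>j\<in>{k - 2<..k}. \<tau> * I (j - 1))) {real (k - 2) * \<tau>..real k * \<tau>}"
    by (rule has_integral_grid_cells) (use assms(3-5) cell in auto)
  then have "integral {real (k - 2) * \<tau>..real k * \<tau>} f = (\<Sum>j\<in>{k - 2<..k}. \<tau> * I (j - 1))"
    by (rule integral_unique)
  also have "\<dots> \<le> real (card {k - 2<..k}) * (\<tau> * M)"
    using assms(3-5) I_bounds by (intro sum_bounded_above) auto
  also have "\<dots> \<le> 2 * (\<tau> * M)"
    using assms(3-5) I_bounds[of 1] by (intro mult_right_mono) auto
  finally show ?thesis
    by (simp add: M_def I_def mult_ac)
qed

theorem lemma2:
  fixes v v1 v2 v3 :: "real \<Rightarrow> real" and \<beta> \<tau> :: real and n :: nat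
  assumes beta: "1 < \<beta>" "\<beta> < 2"
    and tau: "0 < \<tau>"
    and n: "1 \<le> n"
    and d1: "\<And>x. x \<in> {0..real n * \<tau>} \<Longrightarrow> (v has_real_derivative v1 x) (at x within {0..real n * \<tau>})"
    and d2: "\<And>x. x \<in> {0..real n * \<tau>} \<Longrightarrow> (v1 has_real_derivative v2 x) (at x within {0..real n * \<tau>})"
    and c2: "continuous_on {0..real n * \<tau>} v2"
    and d3: "\<And>x. x \<in> {0<..real n * \<tau>} \<Longrightarrow> (v2 has_real_derivative v3 x) (at x within {0..real n * \<tau>})"
    and c3: "continuous_on {0<..real n * \<tau>} v3"
    and L1: "v3 absolutely_integrable_on {0<..real n * \<tau>}"
  shows "\<bar>caputo \<beta> v2 (real n * \<tau>) - Delta_t \<beta> \<tau> v n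
            + 2 * bcoef \<beta> (n - 1) / \<tau> powr (\<beta> - 1) * v1 0\<bar>
         \<le> 9 * (real n * \<tau>) powr (2 - \<beta>) / Gamma (3 - \<beta>)
            * Max ((\<lambda>k. integral {0..1} (\<lambda>\<theta>. \<bar>v3 (real k * \<tau> + \<theta> * \<tau>)\<bar>)) ` {0..n - 1})
            * \<tau>"
proof -
  define M where "M = Max ((\<lambda>k. integral {0..1} (\<lambda>\<theta>. \<bar>v3 (real k * \<tau> + \<theta> * \<tau>)\<bar>)) ` {0..n - 1})"
  define D where "D = second_difference_quotient \<tau> v (v1 0)"
  have int3: "(\<lambda>x. \<bar>v3 x\<bar>) integrable_on {0..real n * \<tau>}"
    by (rule integrable_abs_Icc_of_absolutely_integrable_Ioc[OF L1])
  have approx: "\<bar>v2 s - D k\<bar> \<le> 2 * \<tau> * M"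
    if "k \<in> {1..n}" "s \<in> {real (k - 1) * \<tau>..real k * \<tau>}" for k s
  proof -
    have "real k * \<tau> \<le> real n * \<tau>"
      using that(1) tau by (auto intro: mult_right_mono)
    with that tau show ?thesis
      unfolding D_def M_def
      by (intro order_trans[OF second_difference_quotient_error[OF d1 d2 c2 d3 int3]]
          integral_two_cells_le_max[OF _ int3]) auto
  qed
  have "\<bar>caputo \<beta> v2 (real n * \<tau>) - \<tau> powr (2 - \<beta>) * (\<Sum>k=1..n. bcoef \<beta> (n - k) * D k)\<bar>
      \<le> 2 * \<tau> * M * (real n * \<tau>) powr (2 - \<beta>) / Gamma (3 - \<beta>)"
    by (rule caputo_minus_piecewise_constant_le[OF beta(2) tau c2 approx])
  moreover have "\<tau> powr (2 - \<beta>) * (\<Sum>k=1..n. bcoef \<beta> (n - k) * D k)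
      = Delta_t \<beta> \<tau> v n - 2 * bcoef \<beta> (n - 1) / \<tau> powr (\<beta> - 1) * v1 0"
    unfolding D_def by (rule Delta_t_eq_sum_second_difference_quotient[OF tau n, symmetric])
  moreover have "0 \<le> \<tau> * M * (real n * \<tau>) powr (2 - \<beta>) / Gamma (3 - \<beta>)"
    using approx[of 1 0] n tau beta(2) by (simp add: order_trans[OF abs_ge_zero])
  ultimately show ?thesis
    unfolding M_def[symmetric] by (simp add: field_simps)
qed

end
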